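(* Let $\phi_1,\phi_2$ be as in the context and let $\det J=\phi_{1,x}\phi_{2,y}-\phi_{1,y}\phi_{2,x}$ (assumed invertible as a formal series). Then $\phi_1,\phi_2$ satisfy the pre-reduced hierarchy $\big((\det J)^{-1}\,\Phi_1\wedge\Phi_2\big)_-=0$ if and only if for all $n,j\ge1$ $$\partial_{t_n}\vec\phi=\left(\Big((\det J)^{-1}\begin{vmatrix}\phi_{1,t_n}&\phi_{2,t_n}\\ \phi_{1,y}&\phi_{2,y}\end{vmatrix}\Big)_+\partial_x+\Big((\det J)^{-1}\begin{vmatrix}\phi_{2,t_n}&\phi_{1,t_n}\\ \phi_{2,x}&\phi_{1,x}\end{vmatrix}\Big)_+\partial_y\right)\vec\phi,$$ $$\lambda\partial_{z_j}\vec\phi=\left(\Big((\det J)^{-1}\begin{vmatrix}\lambda\phi_{1,z_j}&\lambda\phi_{2,z_j}\\ \phi_{1,y}&\phi_{2,y}\end{vmatrix}\Big)_+\partial_x+\Big((\det J)^{-1}\begin{vmatrix}\lambda\phi_{2,z_j}&\lambda\phi_{1,z_j}\\ \phi_{2,x}&\phi_{1,x}\end{vmatrix}\Big)_+\partial_y\right)\vec\phi.$$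
   Context: Independent variables are $x,y$ and two infinite families $t_1,t_2,\dots$ and $z_1,z_2,\dots$. $\lambda$ is a formal spectral parameter; for a formal Laurent series, $(\cdot)_+$ is the part with nonnegative powers of $\lambda$ and $(\cdot)_-$ the part with negative powers. Consider formal series $\phi_1=-y+\sum_{j\ge2}z_j\lambda^{j-1}+\sum_{k\ge1}g_k\lambda^{-k}$, $\phi_2=x+t_1\lambda+\sum_{n\ge2}t_n\lambda^n+\sum_{m\ge1}f_m\lambda^{-m}$, with $g_k,f_m$ functions of $(x,y,t_1,t_2,\dots,z_1,z_2,\dots)$; $\vec\phi=(\phi_1,\phi_2)^T$ and vector fields act componentwise. Define $\Phi_i=\phi_{i,x}dx+\phi_{i,y}dy+\sum_{n\ge1}\phi_{i,t_n}dt_n+\lambda\sum_{j\ge1}\phi_{i,z_j}dz_j$. The condition $\big((\det J)^{-1}\Phi_1\wedge\Phi_2\big)_-=0$ means: for every pair of variables $a,b$ among $x,y,t_n,z_j$, the negative-power part of $(\det J)^{-1}\lambda^{\epsilon}(\phi_{1,a}\phi_{2,b}-\phi_{1,b}\phi_{2,a})$ vanishes, where $\epsilon$ is the number of $z$-variables among $a,b$. Subscripts denote partial derivatives. *)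

theory Defs
  imports "HOL-Analysis.Analysis" "HOL-Computational_Algebra.Formal_Laurent_Series"
begin

text \<open>A point of the (infinite-dimensional) space of independent variables is a map
  var \<Rightarrow> real; coefficient functions are real functions of such points.\<close>

datatype var = VX | VY | VT nat | VZ nat

definition valid_var :: "var \<Rightarrow> bool" where
  "valid_var v = (case v of VT n \<Rightarrow> n \<ge> 1 | VZ j \<Rightarrow> j \<ge> 1 | _ \<Rightarrow> True)"

definition pd :: "var \<Rightarrow> ((var \<Rightarrow> real) \<Rightarrow> real) \<Rightarrow> (var \<Rightarrow> real) \<Rightarrow> real" where
  "pd v F p = deriv (\<lambda>s. F (p(v := s))) (p v)"

text \<open>Formal series in the spectral parameter lambda that have only finitely many
  positive powers of lambda are represented as formal Laurent series (type real fls)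
  in the variable mu = lambda^-1: the coefficient of lambda^e is the coefficient of mu^(-e).\<close>

abbreviation lam :: "real fls" where "lam \<equiv> fls_X_inv"

text \<open>(.)_+ : nonnegative powers of lambda;  (.)_- : negative powers of lambda.\<close>
definition lplus :: "real fls \<Rightarrow> real fls" where
  "lplus F = Abs_fls (\<lambda>m. if m \<le> 0 then fls_nth F m else 0)"

definition lminus :: "real fls \<Rightarrow> real fls" where
  "lminus F = Abs_fls (\<lambda>m. if m > 0 then fls_nth F m else 0)"

text \<open>sum_{k \<ge> 1} (\<partial>_v h_k)(p) lambda^-k, for coefficient functions h_k (index k \<ge> 1).\<close>
definition tail_d :: "(nat \<Rightarrow> (var \<Rightarrow> real) \<Rightarrow> real) \<Rightarrow> var \<Rightarrow> (var \<Rightarrow> real) \<Rightarrow> real fls" where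
  "tail_d h v p = fls_X * fps_to_fls (Abs_fps (\<lambda>k. pd v (h (Suc k)) p))"

text \<open>phi_1 = -y + sum_{j\<ge>2} z_j lambda^(j-1) + sum_{k\<ge>1} g_k lambda^-k : its partial derivative
  with respect to v (termwise), at the point p.\<close>
definition dphi1 :: "(nat \<Rightarrow> (var \<Rightarrow> real) \<Rightarrow> real) \<Rightarrow> var \<Rightarrow> (var \<Rightarrow> real) \<Rightarrow> real fls" where
  "dphi1 g v p =
     (case v of VY \<Rightarrow> -1 | VZ j \<Rightarrow> (if j \<ge> 2 then lam ^ (j - 1) else 0) | _ \<Rightarrow> 0)
     + tail_d g v p"

text \<open>phi_2 = x + t_1 lambda + sum_{n\<ge>2} t_n lambda^n + sum_{m\<ge>1} f_m lambda^-m : its partial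
  derivative with respect to v (termwise), at the point p.\<close>
definition dphi2 :: "(nat \<Rightarrow> (var \<Rightarrow> real) \<Rightarrow> real) \<Rightarrow> var \<Rightarrow> (var \<Rightarrow> real) \<Rightarrow> real fls" where
  "dphi2 f v p =
     (case v of VX \<Rightarrow> 1 | VT n \<Rightarrow> (if n \<ge> 1 then lam ^ n else 0) | _ \<Rightarrow> 0)
     + tail_d f v p"

definition dphi :: "(nat \<Rightarrow> (var \<Rightarrow> real) \<Rightarrow> real) \<Rightarrow> (nat \<Rightarrow> (var \<Rightarrow> real) \<Rightarrow> real)
                    \<Rightarrow> nat \<Rightarrow> var \<Rightarrow> (var \<Rightarrow> real) \<Rightarrow> real fls" where
  "dphi g f i v p = (if i = 1 then dphi1 g v p else dphi2 f v p)"

definition detJ :: "(nat \<Rightarrow> (var \<Rightarrow> real) \<Rightarrow> real) \<Rightarrow> (nat \<Rightarrow> (var \<Rightarrow> real) \<Rightarrow> real)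
                    \<Rightarrow> (var \<Rightarrow> real) \<Rightarrow> real fls" where
  "detJ g f p = dphi1 g VX p * dphi2 f VY p - dphi1 g VY p * dphi2 f VX p"

definition eps :: "var \<Rightarrow> nat" where
  "eps v = (case v of VZ _ \<Rightarrow> 1 | _ \<Rightarrow> 0)"

definition pre_reduced :: "(nat \<Rightarrow> (var \<Rightarrow> real) \<Rightarrow> real) \<Rightarrow> (nat \<Rightarrow> (var \<Rightarrow> real) \<Rightarrow> real) \<Rightarrow> bool" where
  "pre_reduced g f \<longleftrightarrow>
     (\<forall>p a b. valid_var a \<longrightarrow> valid_var b \<longrightarrow>
        lminus (inverse (detJ g f p) * lam ^ (eps a + eps b) *
                (dphi1 g a p * dphi2 f b p - dphi1 g b p * dphi2 f a p)) = 0)"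

end

theory Submission
  imports Defs
begin

text \<open>Write \<open>\<alpha>(V)\<close>, \<open>\<beta>(V)\<close> for the Cramer coefficients of a vector \<open>V\<close> with respect to the
  basis \<open>X = \<partial>\<^sub>x\<phi>\<close>, \<open>Y = \<partial>\<^sub>y\<phi>\<close>, so that \<open>V = \<alpha>(V) X + \<beta>(V) Y\<close> and \<open>\<alpha>(V) = (det J)\<^sup>-\<^sup>1 (V \<and> Y)\<close>,
  \<open>\<beta>(V) = (det J)\<^sup>-\<^sup>1 (X \<and> V)\<close>. Replacing \<open>\<alpha>, \<beta>\<close> by their nonnegative parts leaves \<open>V\<close> unchanged
  exactly when \<open>\<alpha>(V), \<beta>(V)\<close> have no negative part; so the Lax equations say that the two-form
  condition holds on the pairs \<open>(a, y)\<close> and \<open>(x, a)\<close>. For a general pair,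
  \<open>(det J)\<^sup>-\<^sup>1 (U \<and> V) = \<alpha>(U) \<beta>(V) - \<alpha>(V) \<beta>(U)\<close>, and series without negative part form a ring,
  so these pairs already force the condition everywhere. The weight \<open>\<lambda>\<^sup>\<epsilon>\<close> is absorbed into the
  vectors. Finally \<open>det J = 1 + O(\<lambda>\<^sup>-\<^sup>1)\<close> is invertible.\<close>

unbundle fps_syntax

lemma lplus_nth: "lplus F $$ m = (if m \<le> 0 then F $$ m else 0)"
  unfolding lplus_def
proof (rule nth_Abs_fls)
  show "\<forall>\<^sub>\<infinity>n. (if - int n \<le> 0 then F $$ (- int n) else 0) = 0"
    using MOST_fls_neg_nth_eq_0[of F] by (auto elim!: MOST_mono)
qed

lemma lminus_nth: "lminus F $$ m = (if m > 0 then F $$ m else 0)"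
  unfolding lminus_def by (rule nth_Abs_fls_lower_bound[of 0]) auto

lemma lplus_add_lminus: "lplus F + lminus F = F"
  by (rule fls_eqI) (simp add: lplus_nth lminus_nth)

lemma lminus_eq_0_iff: "lminus F = 0 \<longleftrightarrow> (\<forall>m>0. F $$ m = 0)"
  by (auto simp: fls_eq_iff lminus_nth)

lemma lplus_eq_0_iff: "lplus F = 0 \<longleftrightarrow> (\<forall>m\<le>0. F $$ m = 0)"
  by (auto simp: fls_eq_iff lplus_nth)

lemma lplus_zero [simp]: "lplus 0 = 0"
  by (simp add: lplus_eq_0_iff)

lemma lminus_lplus [simp]: "lminus (lplus F) = 0"
  by (simp add: lminus_eq_0_iff lplus_nth)

lemma lplus_eq_self: "lminus F = 0 \<Longrightarrow> lplus F = F"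
  using lplus_add_lminus[of F] by simp

lemma lminus_eq_diff_lplus: "lminus F = F - lplus F"
  using lplus_add_lminus[of F] by (simp add: algebra_simps)

lemma lminus_diff_eq_0: "lminus F = 0 \<Longrightarrow> lminus G = 0 \<Longrightarrow> lminus (F - G) = 0"
  by (simp add: lminus_eq_0_iff)

lemma lminus_mult_eq_0:
  assumes "lminus F = 0" "lminus G = 0"
  shows "lminus (F * G) = 0"
proof -
  have "(F * G) $$ n = 0" if "n > 0" for n
  proof -
    have "(F * G) $$ n = (\<Sum>i=fls_subdegree F..n - fls_subdegree G. F $$ i * G $$ (n - i))"
      by (rule fls_times_nth(2))
    also have "\<dots> = 0"
    proof (rule sum.neutral, rule ballI)
      fix i
      show "F $$ i * G $$ (n - i) = 0"
        using assms \<open>n > 0\<close> by (cases "i > 0") (simp_all add: lminus_eq_0_iff)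
    qed
    finally show ?thesis .
  qed
  then show ?thesis by (simp add: lminus_eq_0_iff)
qed

lemma lplus_mult_eq_0:
  assumes "lplus F = 0" "lplus G = 0"
  shows "lplus (F * G) = 0"
proof (cases "F = 0 \<or> G = 0")
  case False
  have "0 < fls_subdegree F" "0 < fls_subdegree G"
    using assms False nth_fls_subdegree_nonzero[of F] nth_fls_subdegree_nonzero[of G]
    by (auto simp: lplus_eq_0_iff not_less[symmetric])
  with False show ?thesis by (simp add: lplus_eq_0_iff)
qed auto

lemma lplus_tail_d: "lplus (tail_d h v p) = 0"
  by (simp add: lplus_eq_0_iff tail_d_def fls_X_times_conv_shift)

lemma detJ_nonzero: "detJ g f p \<noteq> 0"
proof -
  let ?a = "tail_d g VX p" and ?b = "tail_d f VY p" and ?c = "tail_d g VY p" and ?d = "tail_d f VX p"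
  have detJ: "detJ g f p = 1 + (?a * ?b + ?d - ?c - ?c * ?d)"
    by (simp add: detJ_def dphi1_def dphi2_def algebra_simps)
  have "lplus (?a * ?b) = 0" "lplus (?c * ?d) = 0"
    by (simp_all add: lplus_mult_eq_0 lplus_tail_d)
  then have "(?a * ?b + ?d - ?c - ?c * ?d) $$ 0 = 0"
    using lplus_tail_d[of f VX p] lplus_tail_d[of g VY p] by (simp add: lplus_eq_0_iff)
  then have "detJ g f p $$ 0 = 1"
    by (simp add: detJ)
  then show ?thesis by auto
qed

lemma lplus_cramer_expansion_iff:
  fixes X1 X2 Y1 Y2 V1 V2 D :: "real fls"
  assumes D: "D = X1 * Y2 - Y1 * X2" "D \<noteq> 0"
  defines "\<alpha> \<equiv> inverse D * (V1 * Y2 - V2 * Y1)" and "\<beta> \<equiv> inverse D * (V2 * X1 - V1 * X2)"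
  shows "(V1 = lplus \<alpha> * X1 + lplus \<beta> * Y1 \<and> V2 = lplus \<alpha> * X2 + lplus \<beta> * Y2)
         \<longleftrightarrow> lminus \<alpha> = 0 \<and> lminus \<beta> = 0"
proof -
  have "\<alpha> * X1 + \<beta> * Y1 = inverse D * D * V1" "\<alpha> * X2 + \<beta> * Y2 = inverse D * D * V2"
    unfolding \<alpha>_def \<beta>_def D(1) by (simp_all add: algebra_simps)
  then have V1: "V1 = \<alpha> * X1 + \<beta> * Y1" and V2: "V2 = \<alpha> * X2 + \<beta> * Y2"
    using D(2) by simp_all
  show ?thesis
  proof
    assume "V1 = lplus \<alpha> * X1 + lplus \<beta> * Y1 \<and> V2 = lplus \<alpha> * X2 + lplus \<beta> * Y2"
    then have "lminus \<alpha> * X1 + lminus \<beta> * Y1 = 0" "lminus \<alpha> * X2 + lminus \<beta> * Y2 = 0"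
      using V1 V2 unfolding lminus_eq_diff_lplus by (simp_all add: algebra_simps)
    moreover have
      "lminus \<alpha> * D = (lminus \<alpha> * X1 + lminus \<beta> * Y1) * Y2 - (lminus \<alpha> * X2 + lminus \<beta> * Y2) * Y1"
      "lminus \<beta> * D = (lminus \<alpha> * X2 + lminus \<beta> * Y2) * X1 - (lminus \<alpha> * X1 + lminus \<beta> * Y1) * X2"
      by (simp_all add: D(1) algebra_simps)
    ultimately have "lminus \<alpha> * D = 0" "lminus \<beta> * D = 0"
      by simp_all
    then show "lminus \<alpha> = 0 \<and> lminus \<beta> = 0"
      using D(2) by simp
  next
    assume "lminus \<alpha> = 0 \<and> lminus \<beta> = 0"
    then show "V1 = lplus \<alpha> * X1 + lplus \<beta> * Y1 \<and> V2 = lplus \<alpha> * X2 + lplus \<beta> * Y2"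
      using V1 V2 by (simp add: lplus_eq_self)
  qed
qed

lemma lminus_wedge_of_expansions:
  fixes X1 X2 Y1 Y2 U1 U2 V1 V2 D \<alpha>\<^sub>U \<beta>\<^sub>U \<alpha>\<^sub>V \<beta>\<^sub>V :: "real fls"
  assumes D: "D = X1 * Y2 - Y1 * X2" "D \<noteq> 0"
    and U: "U1 = \<alpha>\<^sub>U * X1 + \<beta>\<^sub>U * Y1" "U2 = \<alpha>\<^sub>U * X2 + \<beta>\<^sub>U * Y2"
    and V: "V1 = \<alpha>\<^sub>V * X1 + \<beta>\<^sub>V * Y1" "V2 = \<alpha>\<^sub>V * X2 + \<beta>\<^sub>V * Y2"
    and "lminus \<alpha>\<^sub>U = 0" "lminus \<beta>\<^sub>U = 0" "lminus \<alpha>\<^sub>V = 0" "lminus \<beta>\<^sub>V = 0"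
  shows "lminus (inverse D * (U1 * V2 - V1 * U2)) = 0"
proof -
  have "U1 * V2 - V1 * U2 = D * (\<alpha>\<^sub>U * \<beta>\<^sub>V - \<alpha>\<^sub>V * \<beta>\<^sub>U)"
    unfolding U V D(1) by (simp add: algebra_simps)
  then have "inverse D * (U1 * V2 - V1 * U2) = \<alpha>\<^sub>U * \<beta>\<^sub>V - \<alpha>\<^sub>V * \<beta>\<^sub>U"
    using D(2) by (simp add: mult.assoc[symmetric])
  with assms(7-) show ?thesis
    by (simp add: lminus_diff_eq_0 lminus_mult_eq_0)
qed

lemma two_form_condition_iff_lplus_expansions:
  fixes Q :: "nat \<Rightarrow> 'v \<Rightarrow> real fls" and x y :: 'v
  defines "D \<equiv> Q 1 x * Q 2 y - Q 1 y * Q 2 x"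
  assumes "x \<in> S" "y \<in> S" "D \<noteq> 0"
  shows "(\<forall>a\<in>S. \<forall>b\<in>S. lminus (inverse D * (Q 1 a * Q 2 b - Q 1 b * Q 2 a)) = 0)
    \<longleftrightarrow> (\<forall>a\<in>S - {x, y}. \<forall>i\<in>{1::nat, 2}.
          Q i a = lplus (inverse D * (Q 1 a * Q 2 y - Q 2 a * Q 1 y)) * Q i x
                + lplus (inverse D * (Q 2 a * Q 1 x - Q 1 a * Q 2 x)) * Q i y)"
    (is "?two_form \<longleftrightarrow> (\<forall>a\<in>S - {x, y}. ?lax a)")
proof -
  have D_eq: "D = Q 1 x * Q 2 y - Q 1 y * Q 2 x"
    by (simp add: D_def)
  have lax_iff: "?lax a \<longleftrightarrow> lminus (inverse D * (Q 1 a * Q 2 y - Q 1 y * Q 2 a)) = 0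
                         \<and> lminus (inverse D * (Q 1 x * Q 2 a - Q 1 a * Q 2 x)) = 0" for a
    using lplus_cramer_expansion_iff[OF D_eq \<open>D \<noteq> 0\<close>, of "Q 1 a" "Q 2 a"]
    by (simp add: mult.commute)
  have "?lax x" "?lax y"
    unfolding lax_iff D_eq[symmetric] using \<open>D \<noteq> 0\<close> by (simp_all add: lminus_eq_0_iff)
  then have lax_all_iff: "(\<forall>a\<in>S - {x, y}. ?lax a) \<longleftrightarrow> (\<forall>a\<in>S. ?lax a)"
    by blast
  show ?thesis
    unfolding lax_all_iff
  proof
    assume two_form: ?two_form
    show "\<forall>a\<in>S. ?lax a"
    proof
      fix a assume "a \<in> S"
      show "?lax a"
        unfolding lax_iff
        using two_form[rule_format, OF \<open>a \<in> S\<close> \<open>y \<in> S\<close>] two_form[rule_format, OF \<open>x \<in> S\<close> \<open>a \<in> S\<close>]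
        by (rule conjI)
    qed
  next
    assume lax: "\<forall>a\<in>S. ?lax a"
    let ?\<alpha> = "\<lambda>a. lplus (inverse D * (Q 1 a * Q 2 y - Q 2 a * Q 1 y))"
    let ?\<beta> = "\<lambda>a. lplus (inverse D * (Q 2 a * Q 1 x - Q 1 a * Q 2 x))"
    show ?two_form
    proof (intro ballI)
      fix a b assume "a \<in> S" "b \<in> S"
      have lax_ab: "?lax a" "?lax b"
        using bspec[OF lax \<open>a \<in> S\<close>] bspec[OF lax \<open>b \<in> S\<close>] .
      show "lminus (inverse D * (Q 1 a * Q 2 b - Q 1 b * Q 2 a)) = 0"
      proof (rule lminus_wedge_of_expansions[OF D_eq \<open>D \<noteq> 0\<close>, where
            \<alpha>\<^sub>U = "?\<alpha> a" and \<beta>\<^sub>U = "?\<beta> a" and \<alpha>\<^sub>V = "?\<alpha> b" and \<beta>\<^sub>V = "?\<beta> b"])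
      qed (use lax_ab in simp_all)
    qed
  qed
qed

lemma ball_valid_var_iff:
  "(\<forall>a\<in>{a. valid_var a} - {VX, VY}. P a) \<longleftrightarrow> (\<forall>n\<ge>1. P (VT n)) \<and> (\<forall>j\<ge>1. P (VZ j))"
proof
  assume "\<forall>a\<in>{a. valid_var a} - {VX, VY}. P a"
  then show "(\<forall>n\<ge>1. P (VT n)) \<and> (\<forall>j\<ge>1. P (VZ j))"
    by (simp add: valid_var_def)
next
  assume P: "(\<forall>n\<ge>1. P (VT n)) \<and> (\<forall>j\<ge>1. P (VZ j))"
  show "\<forall>a\<in>{a. valid_var a} - {VX, VY}. P a"
  proof
    fix a assume "a \<in> {a. valid_var a} - {VX, VY}"
    with P show "P a"
      by (cases a) (auto simp: valid_var_def)
  qed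
qed

lemma all_imp_conj_distrib:
  "(\<forall>n j. n \<ge> k \<longrightarrow> j \<ge> k \<longrightarrow> A n \<and> B j) \<longleftrightarrow> (\<forall>n\<ge>k. A n) \<and> (\<forall>j\<ge>k. B j)"
  for k :: "'a::order"
  by blast

definition weighted_dphi ::
    "(nat \<Rightarrow> (var \<Rightarrow> real) \<Rightarrow> real) \<Rightarrow> (nat \<Rightarrow> (var \<Rightarrow> real) \<Rightarrow> real)
     \<Rightarrow> (var \<Rightarrow> real) \<Rightarrow> nat \<Rightarrow> var \<Rightarrow> real fls" where
  "weighted_dphi g f p i a = lam ^ eps a * dphi g f i a p"

lemma weighted_dphi_simps [simp]:
  "weighted_dphi g f p i VX = dphi g f i VX p"
  "weighted_dphi g f p i VY = dphi g f i VY p"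
  "weighted_dphi g f p i (VT n) = dphi g f i (VT n) p"
  "weighted_dphi g f p i (VZ n) = lam * dphi g f i (VZ n) p"
  by (simp_all add: weighted_dphi_def eps_def)

lemma dphi_1_2: "dphi g f 1 = dphi1 g" "dphi g f 2 = dphi2 f"
  by (simp_all add: dphi_def fun_eq_iff)

lemma weighted_dphi_wedge:
  "weighted_dphi g f p 1 a * weighted_dphi g f p 2 b - weighted_dphi g f p 1 b * weighted_dphi g f p 2 a
     = lam ^ (eps a + eps b) * (dphi1 g a p * dphi2 f b p - dphi1 g b p * dphi2 f a p)"
  by (simp add: weighted_dphi_def dphi_def power_add algebra_simps)

lemma detJ_eq_weighted_wedge:
  "weighted_dphi g f p 1 VX * weighted_dphi g f p 2 VY - weighted_dphi g f p 1 VY * weighted_dphi g f p 2 VX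
     = detJ g f p"
  by (simp add: dphi_def detJ_def)

lemma pre_reduced_iff_weighted_two_form:
  "pre_reduced g f \<longleftrightarrow>
     (\<forall>p. \<forall>a\<in>{a. valid_var a}. \<forall>b\<in>{a. valid_var a}.
        lminus (inverse (detJ g f p) * (weighted_dphi g f p 1 a * weighted_dphi g f p 2 b
                                         - weighted_dphi g f p 1 b * weighted_dphi g f p 2 a)) = 0)"
  unfolding pre_reduced_def weighted_dphi_wedge mult.assoc by simp

lemma valid_var_basis: "VX \<in> {a. valid_var a}" "VY \<in> {a. valid_var a}"
  by (simp_all add: valid_var_def)

lemmas weighted_two_form_iff_lplus_expansions = two_form_condition_iff_lplus_expansions
  [where Q = "weighted_dphi g f p" and x = VX and y = VY and S = "{a. valid_var a}",
   unfolded detJ_eq_weighted_wedge, OF valid_var_basis detJ_nonzero,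
   unfolded ball_valid_var_iff weighted_dphi_simps dphi_1_2]
  for g f p

theorem theorem4p1:
  fixes g f :: "nat \<Rightarrow> (var \<Rightarrow> real) \<Rightarrow> real"
  shows "pre_reduced g f \<longleftrightarrow>
    (\<forall>p n j. n \<ge> 1 \<longrightarrow> j \<ge> 1 \<longrightarrow>
       (\<forall>i\<in>{1::nat, 2}.
          dphi g f i (VT n) p =
            lplus (inverse (detJ g f p) *
                   (dphi1 g (VT n) p * dphi2 f VY p - dphi2 f (VT n) p * dphi1 g VY p))
              * dphi g f i VX p
          + lplus (inverse (detJ g f p) *
                   (dphi2 f (VT n) p * dphi1 g VX p - dphi1 g (VT n) p * dphi2 f VX p))
              * dphi g f i VY p
        \<and>
          lam * dphi g f i (VZ j) p =
            lplus (inverse (detJ g f p) *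
                   (lam * dphi1 g (VZ j) p * dphi2 f VY p - lam * dphi2 f (VZ j) p * dphi1 g VY p))
              * dphi g f i VX p
          + lplus (inverse (detJ g f p) *
                   (lam * dphi2 f (VZ j) p * dphi1 g VX p - lam * dphi1 g (VZ j) p * dphi2 f VX p))
              * dphi g f i VY p))"
  unfolding pre_reduced_iff_weighted_two_form weighted_two_form_iff_lplus_expansions
    ball_conj_distrib all_imp_conj_distrib
  by (rule refl)

end
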